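(* Let $q\in(0,1]$. For $\nu\in\mathfrak h^*$ and $\lambda\in P_+$, \[ \varphi^\nu_q(\lambda) = \frac{\varphi^\nu_1(q^{2\lambda+2\rho})}{\varphi^\nu_1(q^{2\rho})}, \] as an identity of the defining formulas (valid for generic $\nu$, i.e. whenever no denominator vanishes, and in general by analytic continuation in $\nu$).
   Context: $K$ is a connected simply connected compact simple Lie group with complexification $G=KAN$ (Iwasawa decomposition), $\mathfrak h$ a Cartan subalgebra, $\Delta_+$ positive roots, $W$ the Weyl group with length function $l$, $P_+$ dominant weights, $\rho=\frac12\sum_{\alpha\in\Delta_+}\alpha$, $(\cdot,\cdot)$ the invariant form normalized by $(\alpha,\alpha)=2$ for short roots. For $\mu\in\mathfrak h^*_{\mathbb{R}}$, $q^\mu\in A$. Define $A_\nu(q^\mu)=\sum_{w\in W}(-1)^{l(w)}q^{(\mu,w\nu)}$, $\chi_\nu(q^\mu)=A_{\nu+\rho}(q^\mu)/A_\rho(q^\mu)$ (analytic continuation of the Weyl character formula), with $\chi_\nu(1)=\prod_{\alpha\in\Delta_+}(\nu+\rho,\alpha)/\prod_{\alpha\in\Delta_+}(\rho,\alpha)$. Set $\varphi^\nu_1(q^\mu)=\chi_{\frac12\nu-\rho}(q^\mu)/\chi_{\frac12\nu-\rho}(1)$ and $\varphi^\nu_q(\lambda)=\chi_\lambda(q^\nu)/\chi_\lambda(q^{2\rho})$ for $\lambda\in P_+$. *)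

theory Defs
  imports "HOL-Analysis.Analysis"
begin

text \<open>Real form h*_R of the dual Cartan subalgebra: a Euclidean space 'a whose inner
product is the invariant form (.,.). The complexification h* is modelled as
'a \<times> 'a, the pair (x, y) standing for x + i y.\<close>

definition reflection :: "'a::euclidean_space \<Rightarrow> 'a \<Rightarrow> 'a" where
  "reflection \<alpha> x = x - (2 * (x \<bullet> \<alpha>) / (\<alpha> \<bullet> \<alpha>)) *\<^sub>R \<alpha>"

definition irreducible_root_system :: "'a::euclidean_space set \<Rightarrow> bool" where
  "irreducible_root_system R \<longleftrightarrow>
     finite R \<and> 0 \<notin> R \<and> span R = UNIV \<and>
     (\<forall>\<alpha>\<in>R. reflection \<alpha> ` R = R) \<and>
     (\<forall>\<alpha>\<in>R. \<forall>\<beta>\<in>R. 2 * (\<alpha> \<bullet> \<beta>) / (\<beta> \<bullet> \<beta>) \<in> \<int>) \<and>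
     (\<forall>\<alpha>\<in>R. \<forall>c::real. c *\<^sub>R \<alpha> \<in> R \<longrightarrow> c = 1 \<or> c = -1) \<and>
     \<not> (\<exists>R1 R2. R1 \<noteq> {} \<and> R2 \<noteq> {} \<and> R1 \<union> R2 = R \<and> (\<forall>a\<in>R1. \<forall>b\<in>R2. a \<bullet> b = 0)) \<and>
     (\<forall>\<alpha>\<in>R. (\<forall>\<beta>\<in>R. \<alpha> \<bullet> \<alpha> \<le> \<beta> \<bullet> \<beta>) \<longrightarrow> \<alpha> \<bullet> \<alpha> = 2)"

definition positive_system :: "'a::euclidean_space set \<Rightarrow> 'a set \<Rightarrow> bool" where
  "positive_system R P \<longleftrightarrow>
     (\<exists>h. (\<forall>\<alpha>\<in>R. \<alpha> \<bullet> h \<noteq> 0) \<and> P = {\<alpha>\<in>R. \<alpha> \<bullet> h > 0})"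

definition simple_roots :: "'a::euclidean_space set \<Rightarrow> 'a set" where
  "simple_roots P = {\<alpha>\<in>P. \<not> (\<exists>\<beta>\<in>P. \<exists>\<gamma>\<in>P. \<alpha> = \<beta> + \<gamma>)}"

definition refl_word :: "'a::euclidean_space list \<Rightarrow> 'a \<Rightarrow> 'a" where
  "refl_word xs = foldr (\<circ>) (map reflection xs) id"

definition weyl :: "'a::euclidean_space set \<Rightarrow> ('a \<Rightarrow> 'a) set" where
  "weyl R = {refl_word xs | xs. set xs \<subseteq> R}"

definition wlen :: "'a::euclidean_space set \<Rightarrow> ('a \<Rightarrow> 'a) \<Rightarrow> nat" where
  "wlen P w = (LEAST n. \<exists>xs. length xs = n \<and> set xs \<subseteq> simple_roots P \<and> w = refl_word xs)"

definition rho :: "'a::euclidean_space set \<Rightarrow> 'a" where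
  "rho P = (1/2) *\<^sub>R (\<Sum>\<alpha>\<in>P. \<alpha>)"

text \<open>Dominant (integral) weights; K simply connected, so P is the full weight lattice.\<close>
definition dominant_weights :: "'a::euclidean_space set \<Rightarrow> 'a set" where
  "dominant_weights P = {l. \<forall>\<alpha>\<in>simple_roots P. 2 * (l \<bullet> \<alpha>) / (\<alpha> \<bullet> \<alpha>) \<in> \<nat>}"

definition cr :: "'a::euclidean_space \<Rightarrow> 'a \<times> 'a" where
  "cr x = (x, 0)"

definition cinner :: "'a::euclidean_space \<times> 'a \<Rightarrow> 'a \<times> 'a \<Rightarrow> complex" where
  "cinner u v = Complex (fst u \<bullet> fst v - snd u \<bullet> snd v) (fst u \<bullet> snd v + snd u \<bullet> fst v)"

definition capp :: "('a \<Rightarrow> 'a) \<Rightarrow> 'a \<times> 'a \<Rightarrow> 'a \<times> 'a" where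
  "capp w v = (w (fst v), w (snd v))"

definition qpow :: "real \<Rightarrow> complex \<Rightarrow> complex" where
  "qpow q z = exp (z * complex_of_real (ln q))"

definition Aalt :: "'a::euclidean_space set \<Rightarrow> 'a set \<Rightarrow> 'a \<times> 'a \<Rightarrow> real \<Rightarrow> 'a \<times> 'a \<Rightarrow> complex" where
  "Aalt R P \<nu> q \<mu> = (\<Sum>w\<in>weyl R. (-1) ^ wlen P w * qpow q (cinner \<mu> (capp w \<nu>)))"

text \<open>chi_nu(1) by the Weyl dimension formula.\<close>
definition chi_one :: "'a::euclidean_space set \<Rightarrow> 'a \<times> 'a \<Rightarrow> complex" where
  "chi_one P \<nu> = (\<Prod>\<alpha>\<in>P. cinner (\<nu> + cr (rho P)) (cr \<alpha>)) / (\<Prod>\<alpha>\<in>P. cinner (cr (rho P)) (cr \<alpha>))"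

definition chi :: "'a::euclidean_space set \<Rightarrow> 'a set \<Rightarrow> 'a \<times> 'a \<Rightarrow> real \<Rightarrow> 'a \<times> 'a \<Rightarrow> complex" where
  "chi R P \<nu> q \<mu> =
     (if q = 1 \<or> \<mu> = 0 then chi_one P \<nu>
      else Aalt R P (\<nu> + cr (rho P)) q \<mu> / Aalt R P (cr (rho P)) q \<mu>)"

definition phi1 :: "'a::euclidean_space set \<Rightarrow> 'a set \<Rightarrow> 'a \<times> 'a \<Rightarrow> real \<Rightarrow> 'a \<times> 'a \<Rightarrow> complex" where
  "phi1 R P \<nu> q \<mu> =
     chi R P ((1/2) *\<^sub>R \<nu> - cr (rho P)) q \<mu> / chi_one P ((1/2) *\<^sub>R \<nu> - cr (rho P))"

definition phiq :: "'a::euclidean_space set \<Rightarrow> 'a set \<Rightarrow> 'a \<times> 'a \<Rightarrow> real \<Rightarrow> 'a \<Rightarrow> complex" where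
  "phiq R P \<nu> q lam = chi R P (cr lam) q \<nu> / chi R P (cr lam) q (cr (2 *\<^sub>R rho P))"

end

theory Submission
  imports Defs
begin

text \<open>Every element of the Weyl group is orthogonal, and its inverse lies in the group and
has the same length; reindexing the alternating sum by w \<mapsto> w\<inverse> therefore gives the duality
A_\<nu>(q^\<mu>) = A_\<mu>(q^\<nu>) for real \<mu>. Applied to the numerators of both values of \<phi>^\<nu>_1, it turns
\<phi>^\<nu>_1(q^(2\<lambda>+2\<rho>)) / \<phi>^\<nu>_1(q^(2\<rho>)) into
(A_(\<lambda>+\<rho>)(q^\<nu>) / A_\<rho>(q^\<nu>)) / (A_(\<lambda>+\<rho>)(q^(2\<rho>)) / A_\<rho>(q^(2\<rho>))), which is \<phi>^\<nu>_q(\<lambda>).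
It remains to see that the arguments 2\<rho> and 2\<lambda> + 2\<rho> avoid the value 0, where the character
is given by the dimension formula instead: -\<rho> is not dominant, for otherwise \<rho> would pair
non-positively with all simple roots, hence with all positive roots, hence with itself.\<close>

lemma linear_reflection: "linear (reflection a)"
  by (rule linearI) (auto simp: reflection_def inner_add_left add_divide_distrib algebra_simps)

lemma reflection_inner: "reflection a x \<bullet> reflection a y = x \<bullet> y"
proof (cases "a = 0")
  case False
  then have "a \<bullet> a \<noteq> 0" by simp
  then show ?thesis
    by (simp add: reflection_def inner_diff_left inner_diff_right inner_commute field_simps)
qed (simp add: reflection_def)

lemma reflection_reflection: "reflection a (reflection a x) = x"
proof (cases "a = 0")
  case False
  then have "a \<bullet> a \<noteq> 0" by simp
  then have "reflection a x \<bullet> a = - (x \<bullet> a)"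
    by (simp add: reflection_def inner_diff_left)
  then show ?thesis by (simp add: reflection_def[of a "reflection a x"]) (simp add: reflection_def)
qed (simp add: reflection_def)

lemma refl_word_Nil [simp]: "refl_word [] = id"
  by (simp add: refl_word_def)

lemma refl_word_Cons [simp]: "refl_word (a # xs) = reflection a \<circ> refl_word xs"
  by (simp add: refl_word_def)

lemma refl_word_append: "refl_word (xs @ ys) = refl_word xs \<circ> refl_word ys"
  by (induction xs) auto

lemma linear_refl_word: "linear (refl_word xs)"
proof (induction xs)
  case (Cons a xs)
  then show ?case unfolding refl_word_Cons by (rule linear_compose[OF _ linear_reflection])
qed (simp add: linear_iff)

lemma refl_word_inner: "refl_word xs x \<bullet> refl_word xs y = x \<bullet> y"
  by (induction xs arbitrary: x y) (auto simp: reflection_inner)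

lemma refl_word_rev_comp: "refl_word (rev xs) \<circ> refl_word xs = id"
proof (induction xs)
  case (Cons a xs)
  then show ?case by (simp add: refl_word_append fun_eq_iff reflection_reflection)
qed simp

lemma inv_refl_word: "inv (refl_word xs) = refl_word (rev xs)"
  using refl_word_rev_comp[of xs] refl_word_rev_comp[of "rev xs"] by (simp add: inv_unique_comp)

lemma bij_refl_word: "bij (refl_word xs)"
  using refl_word_rev_comp[of xs] refl_word_rev_comp[of "rev xs"] by (auto intro: o_bij)

lemma inv_in_weyl: "w \<in> weyl R \<Longrightarrow> inv w \<in> weyl R"
  unfolding weyl_def by (force simp: inv_refl_word)

lemma bij_weyl: "w \<in> weyl R \<Longrightarrow> bij w"
  unfolding weyl_def by (auto simp: bij_refl_word)

lemma linear_weyl: "w \<in> weyl R \<Longrightarrow> linear w"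
  unfolding weyl_def by (auto simp: linear_refl_word)

lemma weyl_inner: "w \<in> weyl R \<Longrightarrow> w x \<bullet> w y = x \<bullet> y"
  unfolding weyl_def by (auto simp: refl_word_inner)

lemma wlen_inv:
  assumes "w \<in> weyl R"
  shows "wlen P (inv w) = wlen P w"
proof -
  have "(\<exists>xs. length xs = n \<and> set xs \<subseteq> S \<and> inv w = refl_word xs)
    \<longleftrightarrow> (\<exists>xs. length xs = n \<and> set xs \<subseteq> S \<and> w = refl_word xs)" for n S
  proof
    assume "\<exists>xs. length xs = n \<and> set xs \<subseteq> S \<and> inv w = refl_word xs"
    then obtain xs where "length xs = n" "set xs \<subseteq> S" "inv w = refl_word xs" by blast
    moreover have "w = inv (inv w)" using bij_weyl[OF assms] by (simp add: inv_inv_eq)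
    ultimately show "\<exists>xs. length xs = n \<and> set xs \<subseteq> S \<and> w = refl_word xs"
      by (intro exI[of _ "rev xs"]) (simp add: inv_refl_word)
  next
    assume "\<exists>xs. length xs = n \<and> set xs \<subseteq> S \<and> w = refl_word xs"
    then show "\<exists>xs. length xs = n \<and> set xs \<subseteq> S \<and> inv w = refl_word xs"
      by (metis inv_refl_word length_rev set_rev)
  qed
  then show ?thesis unfolding wlen_def by presburger
qed

lemma cinner_commute: "cinner u v = cinner v u"
  by (simp add: cinner_def inner_commute add.commute)

lemma cinner_scaleR_left: "cinner (c *\<^sub>R u) v = of_real c * cinner u v"
  by (simp add: cinner_def complex_eq_iff algebra_simps)

lemma cinner_scaleR_right: "cinner u (c *\<^sub>R v) = of_real c * cinner u v"
  by (simp add: cinner_def complex_eq_iff algebra_simps)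

lemma capp_scaleR: "linear w \<Longrightarrow> capp w (c *\<^sub>R v) = c *\<^sub>R capp w v"
  by (simp add: capp_def linear_cmul)

lemma cinner_capp:
  assumes "\<And>x y. w x \<bullet> w y = x \<bullet> y"
  shows "cinner (capp w u) (capp w v) = cinner u v"
  by (simp add: cinner_def capp_def assms)

lemma Aalt_scaleR: "Aalt R P (c *\<^sub>R \<nu>) q \<mu> = Aalt R P \<nu> q (c *\<^sub>R \<mu>)"
  unfolding Aalt_def
  by (intro sum.cong refl)
     (simp add: capp_scaleR linear_weyl cinner_scaleR_left cinner_scaleR_right)

lemma Aalt_swap: "Aalt R P \<nu> q (cr y) = Aalt R P (cr y) q \<nu>"
proof -
  have "Aalt R P (cr y) q \<nu>
      = (\<Sum>w\<in>weyl R. (-1) ^ wlen P (inv w) * qpow q (cinner \<nu> (capp (inv w) (cr y))))"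
    unfolding Aalt_def
    by (rule sum.reindex_bij_witness[where i=inv and j=inv])
       (auto simp: inv_in_weyl bij_weyl inv_inv_eq)
  also have "\<dots> = Aalt R P \<nu> q (cr y)"
    unfolding Aalt_def
  proof (intro sum.cong refl)
    fix w assume w: "w \<in> weyl R"
    have "w (inv w x) = x" for x
      using bij_weyl[OF w] by (simp add: bij_is_surj surj_f_inv_f)
    then have "capp w (capp (inv w) v) = v" for v
      by (simp add: capp_def)
    then have "cinner \<nu> (capp (inv w) (cr y)) = cinner (capp w \<nu>) (cr y)"
      using cinner_capp[OF weyl_inner[OF w], of \<nu> "capp (inv w) (cr y)"] by simp
    then show "(-1) ^ wlen P (inv w) * qpow q (cinner \<nu> (capp (inv w) (cr y)))
        = (-1) ^ wlen P w * qpow q (cinner (cr y) (capp w \<nu>))"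
      by (simp add: wlen_inv[OF w] cinner_commute)
  qed
  finally show ?thesis ..
qed

lemma positive_systemE:
  fixes R P :: "'a::euclidean_space set"
  assumes R: "irreducible_root_system R" and "positive_system R P"
  obtains h :: 'a where "finite P" "P \<noteq> {}" "\<forall>\<alpha>\<in>P. 0 < \<alpha> \<bullet> h"
proof -
  obtain h where h: "\<forall>\<alpha>\<in>R. \<alpha> \<bullet> h \<noteq> 0" and P: "P = {\<alpha>\<in>R. \<alpha> \<bullet> h > 0}"
    using assms(2) unfolding positive_system_def by blast
  have fin: "finite R" and span: "span R = UNIV" and refl: "\<forall>\<alpha>\<in>R. reflection \<alpha> ` R = R"
    using R unfolding irreducible_root_system_def by simp_all
  have "R \<noteq> {}"
  proof
    assume "R = {}"
    then have "(UNIV :: 'a set) = {0}" using span by simp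
    then show False using nonzero_Basis SOME_Basis by blast
  qed
  then obtain \<alpha> where \<alpha>: "\<alpha> \<in> R" by blast
  have "reflection \<alpha> \<alpha> = - \<alpha>"
    by (cases "\<alpha> = 0") (simp_all add: reflection_def scaleR_2)
  then have "- \<alpha> \<in> R" using refl \<alpha> by (metis imageI)
  moreover have "0 < \<alpha> \<bullet> h \<or> 0 < (- \<alpha>) \<bullet> h"
    using h \<alpha> by (metis inner_minus_left neg_0_less_iff_less neq_iff)
  ultimately have "P \<noteq> {}" using \<alpha> unfolding P by blast
  moreover have "finite P" using fin unfolding P by simp
  ultimately show ?thesis using that P by blast
qed

lemma rho_inner: "rho P \<bullet> x = (1/2) * (\<Sum>\<alpha>\<in>P. \<alpha> \<bullet> x)"
  by (simp only: rho_def inner_scaleR_left inner_sum_left)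

lemma rho_inner_pos:
  assumes "finite P" "P \<noteq> {}" "\<forall>\<alpha>\<in>P. 0 < \<alpha> \<bullet> h"
  shows "0 < rho P \<bullet> h"
proof -
  have "0 < (\<Sum>\<alpha>\<in>P. \<alpha> \<bullet> h)" using assms by (intro sum_pos) auto
  then show ?thesis by (simp add: rho_inner)
qed

lemma dominant_inner_simple_nonneg:
  assumes "l \<in> dominant_weights P" "\<alpha> \<in> simple_roots P" "\<alpha> \<noteq> 0"
  shows "0 \<le> l \<bullet> \<alpha>"
proof -
  obtain n :: nat where "2 * (l \<bullet> \<alpha>) / (\<alpha> \<bullet> \<alpha>) = real n"
    using assms(1,2) unfolding dominant_weights_def by (blast elim: Nats_cases)
  then have "0 \<le> 2 * (l \<bullet> \<alpha>) / (\<alpha> \<bullet> \<alpha>)" by simp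
  moreover have "0 < \<alpha> \<bullet> \<alpha>" using assms(3) by simp
  ultimately show ?thesis by (simp add: zero_le_divide_iff)
qed

text \<open>Positive roots lie in the cone spanned by the simple roots; the induction is on the
number of positive roots lying below \<open>\<beta>\<close> with respect to \<open>h\<close>.\<close>
lemma positive_root_inner_nonpos:
  assumes P: "finite P" "\<forall>\<alpha>\<in>P. 0 < \<alpha> \<bullet> h"
    and simple: "\<And>\<alpha>. \<alpha> \<in> simple_roots P \<Longrightarrow> \<alpha> \<bullet> v \<le> 0"
    and "\<beta> \<in> P"
  shows "\<beta> \<bullet> v \<le> 0"
  using \<open>\<beta> \<in> P\<close>
proof (induction "card {\<gamma>\<in>P. \<gamma> \<bullet> h < \<beta> \<bullet> h}" arbitrary: \<beta> rule: less_induct)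
  case less
  show ?case
  proof (cases "\<beta> \<in> simple_roots P")
    case False
    then obtain \<gamma> \<delta> where \<gamma>\<delta>: "\<gamma> \<in> P" "\<delta> \<in> P" "\<beta> = \<gamma> + \<delta>"
      using less.prems unfolding simple_roots_def by blast
    have below: "\<xi> \<bullet> v \<le> 0" if "\<xi> \<in> P" "\<xi> \<bullet> h < \<beta> \<bullet> h" for \<xi>
    proof (rule less.hyps[OF _ \<open>\<xi> \<in> P\<close>])
      have "{\<gamma>\<in>P. \<gamma> \<bullet> h < \<xi> \<bullet> h} \<subset> {\<gamma>\<in>P. \<gamma> \<bullet> h < \<beta> \<bullet> h}"
        using that by auto
      then show "card {\<gamma>\<in>P. \<gamma> \<bullet> h < \<xi> \<bullet> h} < card {\<gamma>\<in>P. \<gamma> \<bullet> h < \<beta> \<bullet> h}"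
        using P(1) by (simp add: psubset_card_mono)
    qed
    have "\<gamma> \<bullet> h < \<beta> \<bullet> h" "\<delta> \<bullet> h < \<beta> \<bullet> h"
      using \<gamma>\<delta> P(2) by (auto simp: inner_add_left)
    then show ?thesis
      using below \<gamma>\<delta> by (simp add: inner_add_left add_nonpos_nonpos)
  qed (rule simple)
qed

lemma neg_rho_not_dominant:
  assumes P: "finite P" "P \<noteq> {}" "\<forall>\<alpha>\<in>P. 0 < \<alpha> \<bullet> h"
  shows "- rho P \<notin> dominant_weights P"
proof
  assume dom: "- rho P \<in> dominant_weights P"
  have "\<alpha> \<bullet> rho P \<le> 0" if "\<alpha> \<in> simple_roots P" for \<alpha>
  proof -
    have "\<alpha> \<noteq> 0" using that P(3) unfolding simple_roots_def by auto
    then show ?thesis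
      using dominant_inner_simple_nonneg[OF dom that] by (simp add: inner_commute)
  qed
  then have "\<beta> \<bullet> rho P \<le> 0" if "\<beta> \<in> P" for \<beta>
    using positive_root_inner_nonpos[OF P(1,3)] that by blast
  then have "rho P \<bullet> rho P \<le> 0"
    unfolding rho_inner[of P "rho P"] by (simp add: sum_nonpos)
  then have "rho P = 0" by (meson inner_gt_zero_iff not_le)
  then show False using rho_inner_pos[OF P] by simp
qed

lemma cr_scaleR: "cr (c *\<^sub>R x) = c *\<^sub>R cr x"
  by (simp add: cr_def)

lemma Aalt_cr_double_swap: "Aalt R P (cr x) q (cr (2 *\<^sub>R y)) = Aalt R P (cr y) q (cr (2 *\<^sub>R x))"
proof -
  have "Aalt R P (cr x) q (cr (2 *\<^sub>R y)) = Aalt R P (2 *\<^sub>R cr y) q (cr x)"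
    by (simp add: Aalt_swap cr_scaleR)
  also have "\<dots> = Aalt R P (cr y) q (cr (2 *\<^sub>R x))"
    by (simp add: Aalt_scaleR cr_scaleR)
  finally show ?thesis .
qed

lemma chi_one_neg_rho: "finite P \<Longrightarrow> P \<noteq> {} \<Longrightarrow> chi_one P (- cr (rho P)) = 0"
  by (auto simp: chi_one_def cinner_def cr_def Complex_eq_0)

lemma phi1_cr_double:
  assumes "q \<noteq> 1" "y \<noteq> 0"
  shows "phi1 R P \<nu> q (cr (2 *\<^sub>R y)) =
    Aalt R P (cr y) q \<nu> / Aalt R P (cr (rho P)) q (cr (2 *\<^sub>R y))
      / chi_one P ((1/2) *\<^sub>R \<nu> - cr (rho P))"
proof -
  have "Aalt R P ((1/2) *\<^sub>R \<nu>) q (cr (2 *\<^sub>R y)) = Aalt R P (cr y) q \<nu>"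
    by (simp add: Aalt_scaleR Aalt_swap cr_scaleR)
  then show ?thesis
    using assms by (simp add: phi1_def chi_def cr_def zero_prod_def)
qed

lemma phiq_generic:
  assumes "q \<noteq> 1" "\<nu> \<noteq> 0" "rho P \<noteq> 0"
  shows "phiq R P \<nu> q l =
    (Aalt R P (cr (l + rho P)) q \<nu> / Aalt R P (cr (rho P)) q \<nu>)
      / (Aalt R P (cr (l + rho P)) q (cr (2 *\<^sub>R rho P))
          / Aalt R P (cr (rho P)) q (cr (2 *\<^sub>R rho P)))"
  using assms by (simp add: phiq_def chi_def cr_def zero_prod_def)

theorem proposition4p3:
  fixes R P :: "'a::euclidean_space set" and q :: real
    and \<nu> :: "'a \<times> 'a" and lam :: 'a
  assumes "irreducible_root_system R"
    and "positive_system R P"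
    and "0 < q" and "q \<le> 1"
    and "lam \<in> dominant_weights P"
    \<comment> \<open>genericity: none of the denominators in the defining formulas vanishes\<close>
    and "q \<noteq> 1 \<Longrightarrow> \<nu> \<noteq> 0 \<Longrightarrow> Aalt R P (cr (rho P)) q \<nu> \<noteq> 0"
    and "q \<noteq> 1 \<Longrightarrow> Aalt R P (cr (rho P)) q (cr (2 *\<^sub>R rho P)) \<noteq> 0"
    and "q \<noteq> 1 \<Longrightarrow> Aalt R P (cr (rho P)) q (cr (2 *\<^sub>R lam + 2 *\<^sub>R rho P)) \<noteq> 0"
    and "chi R P (cr lam) q (cr (2 *\<^sub>R rho P)) \<noteq> 0"
    and "chi_one P ((1/2) *\<^sub>R \<nu> - cr (rho P)) \<noteq> 0"
    and "phi1 R P \<nu> q (cr (2 *\<^sub>R rho P)) \<noteq> 0"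
  shows "phiq R P \<nu> q lam =
           phi1 R P \<nu> q (cr (2 *\<^sub>R lam + 2 *\<^sub>R rho P)) / phi1 R P \<nu> q (cr (2 *\<^sub>R rho P))"
proof (cases "q = 1")
  case True
  then show ?thesis using assms(9,10) by (simp add: phiq_def phi1_def chi_def)
next
  case q: False
  obtain h where P: "finite P" "P \<noteq> {}" "\<forall>\<alpha>\<in>P. 0 < \<alpha> \<bullet> h"
    using positive_systemE[OF assms(1,2)] .
  have "\<nu> \<noteq> 0" using assms(10) chi_one_neg_rho[OF P(1,2)] by auto
  have "rho P \<noteq> 0" using rho_inner_pos[OF P] by auto
  have "lam + rho P \<noteq> 0" using assms(5) neg_rho_not_dominant[OF P] by (auto simp: add_eq_0_iff)
  have double: "2 *\<^sub>R lam + 2 *\<^sub>R rho P = 2 *\<^sub>R (lam + rho P)"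
    by (simp add: scaleR_add_right)
  show ?thesis
    unfolding double phiq_generic[OF q \<open>\<nu> \<noteq> 0\<close> \<open>rho P \<noteq> 0\<close>]
      phi1_cr_double[OF q \<open>lam + rho P \<noteq> 0\<close>] phi1_cr_double[OF q \<open>rho P \<noteq> 0\<close>]
      Aalt_cr_double_swap[of R P "lam + rho P" q "rho P"]
    using q assms(6,7,8,10) by (simp add: double)
qed

end
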